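(* If $1 \leq i \neq j \leq r$, then for any $l \geq 1$ the graph $\mathcal{H}(V_i,V_j)$ contains no copy of $K_{2,2l^2 - l + 1}$.
   Context: Let $r \geq 2$ and $l \geq 1$ be integers and $q$ a power of an odd prime. Let $\alpha_1, \dots, \alpha_r$ be distinct elements of $\mathbb{F}_q$, and let $m_1, \dots, m_l$ be distinct elements of $\mathbb{F}_q^* = \mathbb{F}_q\setminus\{0\}$ such that $m_s(\alpha_k - \alpha_i) \neq m_t(\alpha_k - \alpha_j)$ whenever $1 \leq s,t \leq l$ and $i,j,k$ are distinct integers in $\{1,\dots,r\}$. For $1 \leq i \leq r$ let $V_i = \mathbb{F}_q \times \mathbb{F}_q \times \{i\}$. For $x,y \in \mathbb{F}_q$, $a \in \mathbb{F}_q^*$, $s \in \{1,\dots,l\}$ let \[ e(x,y,a,m_s) = \{(x + \alpha_i m_s a,\; y + \alpha_i m_s a^2,\; i) : 1 \leq i \leq r\}. \] $\mathcal{H}$ is the $r$-uniform hypergraph with vertex set $V_1 \cup \dots \cup V_r$ and edge set $\{e(x,y,a,m_s) : x,y \in \mathbb{F}_q,\ a \in \mathbb{F}_q^*,\ 1 \leq s \leq l\}$. For $i \neq j$, $\mathcal{H}(V_i,V_j)$ is the bipartite graph with parts $V_i$ and $V_j$ in which $u \in V_i$ and $w \in V_j$ are adjacent iff $\{u,w\} \subseteq e$ for some edge $e$ of $\mathcal{H}$. *)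

theory Defs
  imports Main
begin

definition Vpart :: "nat \<Rightarrow> ('a \<times> 'a \<times> nat) set" where
  "Vpart i = UNIV \<times> UNIV \<times> {i}"

definition hedge :: "(nat \<Rightarrow> 'a::field) \<Rightarrow> nat \<Rightarrow> 'a \<Rightarrow> 'a \<Rightarrow> 'a \<Rightarrow> 'a \<Rightarrow> ('a \<times> 'a \<times> nat) set" where
  "hedge \<alpha> r x y a ms = {(x + \<alpha> i * ms * a, y + \<alpha> i * ms * a^2, i) | i. 1 \<le> i \<and> i \<le> r}"

definition hedges :: "(nat \<Rightarrow> 'a::field) \<Rightarrow> (nat \<Rightarrow> 'a) \<Rightarrow> nat \<Rightarrow> nat \<Rightarrow> ('a \<times> 'a \<times> nat) set set" where
  "hedges \<alpha> m r l = {hedge \<alpha> r x y a (m s) | x y a s. a \<noteq> 0 \<and> 1 \<le> s \<and> s \<le> l}"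

definition bip_adj :: "(nat \<Rightarrow> 'a::field) \<Rightarrow> (nat \<Rightarrow> 'a) \<Rightarrow> nat \<Rightarrow> nat \<Rightarrow> nat \<Rightarrow> nat
    \<Rightarrow> ('a \<times> 'a \<times> nat) \<Rightarrow> ('a \<times> 'a \<times> nat) \<Rightarrow> bool" where
  "bip_adj \<alpha> m r l i j u w \<longleftrightarrow>
     ((u \<in> Vpart i \<and> w \<in> Vpart j) \<or> (u \<in> Vpart j \<and> w \<in> Vpart i)) \<and>
     (\<exists>e \<in> hedges \<alpha> m r l. {u, w} \<subseteq> e)"

definition contains_Kst :: "('v \<Rightarrow> 'v \<Rightarrow> bool) \<Rightarrow> 'v set \<Rightarrow> nat \<Rightarrow> nat \<Rightarrow> bool" where
  "contains_Kst adj V s t \<longleftrightarrow>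
     (\<exists>A B. A \<subseteq> V \<and> B \<subseteq> V \<and> A \<inter> B = {} \<and> finite A \<and> finite B \<and>
            card A = s \<and> card B = t \<and> (\<forall>a\<in>A. \<forall>b\<in>B. adj a b))"

end

theory Submission
  imports Defs "HOL-Number_Theory.Residues"
begin

text \<open>
  Give the vertex (X, Y, p) of V_p the coordinates (X, Y). Two vertices u in V_p and
  w in V_q on a common edge e(x,y,a,m_s) satisfy (X_w - X_u)^2 = c_s (Y_w - Y_u) with
  c_s = (alpha_q - alpha_p) m_s, so w lies on one of l parabolas with apex u. A common
  neighbour of u and u' in V_p therefore lies on the intersection of a parabola with
  apex u and factor c_s and one with apex u' and factor c_t. On that intersection
  c_t (X - X_u)^2 - c_s (X - X_u')^2 is constant, so two of its points with distinct
  abscissae have a fixed abscissa sum: the intersection has at most two points, and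
  at most one when s = t, since then (2 being invertible for odd q) the abscissa is
  determined. Summing over the l^2 pairs (s, t) bounds the common neighbourhood by
  l + 2 l (l - 1) = 2 l^2 - l.
\<close>

lemma two_neq_zero_if_odd_card:
  assumes "odd (card (UNIV :: 'a::ring_1 set))"
  shows "(2::'a) \<noteq> 0"
proof
  assume two: "(2::'a) = 0"
  obtain k where k: "card (UNIV :: 'a set) = 2 * k + 1"
    using assms oddE by blast
  have "(of_nat (card (UNIV :: 'a set)) :: 'a) = 0"
    using CHAR_dvd_CARD of_nat_eq_0_iff_char_dvd by blast
  moreover have "(of_nat (card (UNIV :: 'a set)) :: 'a) = 1"
    using two by (simp add: k)
  ultimately show False by simp
qed

lemma card_le_2_if_no_three_distinct:
  assumes "finite S" and "\<And>x y z. x \<in> S \<Longrightarrow> y \<in> S \<Longrightarrow> z \<in> S \<Longrightarrow> x = y \<or> x = z \<or> y = z"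
  shows "card S \<le> 2"
proof (cases "S = {}")
  case False
  then obtain x where x: "x \<in> S" by blast
  have "card (S - {x}) \<le> Suc 0"
    using assms x by (subst card_le_Suc0_iff_eq) blast+
  moreover have "card S = Suc (card (S - {x}))"
    using assms(1) x by (rule card_Suc_Diff1[symmetric])
  ultimately show ?thesis
    by simp
qed simp

lemma sum_sum_if_eq_1_2:
  assumes "finite I"
  shows "(\<Sum>s\<in>I. \<Sum>t\<in>I. if s = t then 1 else 2::nat) = 2 * card I ^ 2 - card I"
proof -
  have inner: "(\<Sum>t\<in>I. if s = t then 1 else 2::nat) = 2 * card I - 1" if "s \<in> I" for s
  proof -
    have "(\<Sum>t\<in>I. if s = t then 1 else 2::nat) = 1 + (\<Sum>t\<in>I - {s}. if s = t then 1 else 2)"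
      using assms that by (subst sum.remove[of _ s]) auto
    also have "(\<Sum>t\<in>I - {s}. if s = t then 1 else 2::nat) = (\<Sum>t\<in>I - {s}. 2)"
      by (rule sum.cong) auto
    also have "1 + \<dots> = 2 * card I - 1"
      using assms that card_gt_0_iff[of I] by (auto simp: card_Diff_singleton)
    finally show ?thesis .
  qed
  have "(\<Sum>s\<in>I. \<Sum>t\<in>I. if s = t then 1 else 2::nat) = card I * (2 * card I - 1)"
    by (simp add: inner)
  also have "\<dots> = 2 * card I ^ 2 - card I"
    by (simp add: power2_eq_square diff_mult_distrib2 algebra_simps)
  finally show ?thesis .
qed

definition parabola :: "'a::field \<Rightarrow> 'a \<times> 'a \<Rightarrow> ('a \<times> 'a) set" where
  "parabola c v = {(X, Y). (X - fst v)\<^sup>2 = c * (Y - snd v)}"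

lemma parabola_fst_inj:
  assumes "c \<noteq> 0" "P \<in> parabola c v" "Q \<in> parabola c v" "fst P = fst Q"
  shows "P = Q"
  using assms by (cases P; cases Q) (auto simp: parabola_def)

lemma parabola_inter_fst_sum:
  assumes P: "P \<in> parabola c u" "P \<in> parabola c' v"
    and Q: "Q \<in> parabola c u" "Q \<in> parabola c' v"
    and "fst P \<noteq> fst Q"
  shows "(c' - c) * (fst P + fst Q) = 2 * (c' * fst u - c * fst v)"
proof -
  define g where "g X = c' * (X - fst u)\<^sup>2 - c * (X - fst v)\<^sup>2" for X
  \<comment> \<open>g is constant on the intersection, and a quadratic takes equal values at X \<noteq> X'
     only if X + X' is fixed.\<close>
  have g_const: "g (fst R) = c * c' * (snd v - snd u)"
    if "R \<in> parabola c u" "R \<in> parabola c' v" for R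
  proof -
    have on_both: "(fst R - fst u)\<^sup>2 = c * (snd R - snd u)" "(fst R - fst v)\<^sup>2 = c' * (snd R - snd v)"
      using that by (auto simp: parabola_def)
    show ?thesis
      unfolding g_def on_both by (simp add: algebra_simps)
  qed
  have "g (fst P) - g (fst Q)
          = (fst P - fst Q) * ((c' - c) * (fst P + fst Q) - 2 * (c' * fst u - c * fst v))"
    by (simp add: g_def power2_eq_square algebra_simps)
  then show ?thesis
    using g_const[OF P] g_const[OF Q] assms(5) by simp
qed

lemma parabola_inter_same_factor_unique:
  fixes c :: "'a::field"
  assumes "(2::'a) \<noteq> 0" "c \<noteq> 0" "u \<noteq> v"
    and "P \<in> parabola c u \<inter> parabola c v" "Q \<in> parabola c u \<inter> parabola c v"
  shows "P = Q"
proof (rule ccontr)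
  assume "P \<noteq> Q"
  then have "fst P \<noteq> fst Q"
    using assms parabola_fst_inj by blast
  then have "(c - c) * (fst P + fst Q) = 2 * (c * fst u - c * fst v)"
    using parabola_inter_fst_sum[of P c u c v Q] assms(4,5) by blast
  then have "fst u = fst v"
    using assms(1,2) by (auto simp: algebra_simps)
  moreover have "snd u = snd v"
    using assms(2,4) \<open>fst u = fst v\<close> by (cases P) (auto simp: parabola_def)
  ultimately show False
    using \<open>u \<noteq> v\<close> by (simp add: prod_eq_iff)
qed

lemma parabola_inter_no_three_distinct:
  assumes "c \<noteq> 0" "c' \<noteq> c"
    and "P \<in> parabola c u \<inter> parabola c' v" "Q \<in> parabola c u \<inter> parabola c' v"
      "R \<in> parabola c u \<inter> parabola c' v"
  shows "P = Q \<or> P = R \<or> Q = R"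
proof (rule ccontr)
  assume "\<not> ?thesis"
  then have "fst P \<noteq> fst Q" "fst P \<noteq> fst R" "fst Q \<noteq> fst R"
    using assms parabola_fst_inj[of c _ u] by blast+
  then have "(c' - c) * (fst P + fst Q) = (c' - c) * (fst P + fst R)"
    using parabola_inter_fst_sum[of _ c u c' v] assms by (metis IntD1 IntD2)
  then show False
    using assms(2) \<open>fst Q \<noteq> fst R\<close> by simp
qed

lemma card_parabola_inter_le:
  fixes c c' :: "'a::{field,finite}"
  assumes "(2::'a) \<noteq> 0" "c \<noteq> 0" "u \<noteq> v"
  shows "card (parabola c u \<inter> parabola c' v) \<le> (if c = c' then 1 else 2)"
proof (cases "c = c'")
  case True
  then show ?thesis
    using parabola_inter_same_factor_unique[OF assms] by (simp add: card_le_Suc0_iff_eq)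
next
  case False
  have "card (parabola c u \<inter> parabola c' v) \<le> 2"
  proof (rule card_le_2_if_no_three_distinct)
    fix P Q R
    assume "P \<in> parabola c u \<inter> parabola c' v" "Q \<in> parabola c u \<inter> parabola c' v"
      "R \<in> parabola c u \<inter> parabola c' v"
    then show "P = Q \<or> P = R \<or> Q = R"
      by (rule parabola_inter_no_three_distinct[OF assms(2) not_sym[OF False]])
  qed simp
  with False show ?thesis
    by simp
qed

definition coords :: "'a \<times> 'a \<times> nat \<Rightarrow> 'a \<times> 'a" where
  "coords w = (fst w, fst (snd w))"

lemma inj_on_coords_Vpart: "inj_on coords (Vpart p)"
  by (auto simp: inj_on_def coords_def Vpart_def)

lemma hedge_pair_on_parabola:
  assumes "{u, w} \<subseteq> hedge \<alpha> r x y a ms" "u \<in> Vpart p" "w \<in> Vpart q"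
  shows "coords w \<in> parabola ((\<alpha> q - \<alpha> p) * ms) (coords u)"
proof -
  obtain k k' where u: "u = (x + \<alpha> k * ms * a, y + \<alpha> k * ms * a\<^sup>2, k)"
    and w: "w = (x + \<alpha> k' * ms * a, y + \<alpha> k' * ms * a\<^sup>2, k')"
    using assms(1) unfolding hedge_def by blast
  have "k = p" "k' = q"
    using assms(2,3) u w by (auto simp: Vpart_def)
  then show ?thesis
    using u w by (simp add: parabola_def coords_def power2_eq_square algebra_simps)
qed

lemma hedges_pair_on_parabola:
  assumes "e \<in> hedges \<alpha> m r l" "{u, w} \<subseteq> e" "u \<in> Vpart p" "w \<in> Vpart q"
  obtains s where "s \<in> {1..l}" "coords w \<in> parabola ((\<alpha> q - \<alpha> p) * m s) (coords u)"
proof -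
  obtain x y a s where s: "1 \<le> s" "s \<le> l" and e: "e = hedge \<alpha> r x y a (m s)"
    using assms(1) unfolding hedges_def by blast
  have "coords w \<in> parabola ((\<alpha> q - \<alpha> p) * m s) (coords u)"
    using assms(2) unfolding e by (rule hedge_pair_on_parabola[OF _ assms(3,4)])
  with s show thesis
    by (intro that) simp_all
qed

lemma card_common_neighbours_le:
  fixes \<alpha> m :: "nat \<Rightarrow> 'a::{field,finite}"
  assumes two: "(2::'a) \<noteq> 0" and apq: "\<alpha> p \<noteq> \<alpha> q"
    and m_inj: "inj_on m {1..l}" and m_nz: "\<forall>s\<in>{1..l}. m s \<noteq> 0"
    and u: "u \<in> Vpart p" "u' \<in> Vpart p" "u \<noteq> u'"
    and B: "B \<subseteq> Vpart q"
    and adj: "\<forall>w\<in>B. (\<exists>e\<in>hedges \<alpha> m r l. {u, w} \<subseteq> e) \<and> (\<exists>e\<in>hedges \<alpha> m r l. {u', w} \<subseteq> e)"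
  shows "card B \<le> 2 * l\<^sup>2 - l"
proof -
  define c where "c s = (\<alpha> q - \<alpha> p) * m s" for s
  define N where "N s t = parabola (c s) (coords u) \<inter> parabola (c t) (coords u')" for s t
  have c_nz: "c s \<noteq> 0" if "s \<in> {1..l}" for s
    using m_nz that apq by (simp add: c_def)
  have c_eq_iff: "c s = c t \<longleftrightarrow> s = t" if "s \<in> {1..l}" "t \<in> {1..l}" for s t
    using apq inj_onD[OF m_inj _ that] by (auto simp: c_def)
  have "coords u \<noteq> coords u'"
    using inj_on_coords_Vpart u by (metis inj_onD)
  then have card_N: "card (N s t) \<le> (if s = t then 1 else 2)" if "s \<in> {1..l}" "t \<in> {1..l}" for s t
    using card_parabola_inter_le[OF two c_nz[OF that(1)] \<open>coords u \<noteq> coords u'\<close>, of "c t"]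
      c_eq_iff[OF that] by (simp add: N_def)
  have cover: "coords ` B \<subseteq> (\<Union>s\<in>{1..l}. \<Union>t\<in>{1..l}. N s t)"
  proof
    fix P assume "P \<in> coords ` B"
    then obtain w where w: "w \<in> B" "P = coords w" by blast
    with B have "w \<in> Vpart q" by blast
    obtain e e' where e: "e \<in> hedges \<alpha> m r l" "{u, w} \<subseteq> e"
      and e': "e' \<in> hedges \<alpha> m r l" "{u', w} \<subseteq> e'"
      using adj w(1) by blast
    obtain s where "s \<in> {1..l}" "P \<in> parabola (c s) (coords u)"
      using hedges_pair_on_parabola[OF e u(1) \<open>w \<in> Vpart q\<close>] w(2) unfolding c_def by blast
    moreover obtain t where "t \<in> {1..l}" "P \<in> parabola (c t) (coords u')"
      using hedges_pair_on_parabola[OF e' u(2) \<open>w \<in> Vpart q\<close>] w(2) unfolding c_def by blast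
    ultimately show "P \<in> (\<Union>s\<in>{1..l}. \<Union>t\<in>{1..l}. N s t)"
      by (auto simp: N_def)
  qed
  have "card B = card (coords ` B)"
    using card_image[OF inj_on_subset[OF inj_on_coords_Vpart B]] by simp
  also have "\<dots> \<le> card (\<Union>s\<in>{1..l}. \<Union>t\<in>{1..l}. N s t)"
    using cover by (rule card_mono[OF finite])
  also have "\<dots> \<le> (\<Sum>s\<in>{1..l}. card (\<Union>t\<in>{1..l}. N s t))"
    by (rule card_UN_le) simp
  also have "\<dots> \<le> (\<Sum>s\<in>{1..l}. \<Sum>t\<in>{1..l}. card (N s t))"
    by (intro sum_mono card_UN_le) simp
  also have "\<dots> \<le> (\<Sum>s\<in>{1..l}. \<Sum>t\<in>{1..l}. if s = t then 1 else 2)"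
    by (intro sum_mono card_N)
  also have "\<dots> = 2 * l\<^sup>2 - l"
    by (simp add: sum_sum_if_eq_1_2)
  finally show ?thesis .
qed

lemma bip_adj_commute: "bip_adj \<alpha> m r l i j = bip_adj \<alpha> m r l j i"
  by (auto simp: bip_adj_def fun_eq_iff)

lemma bip_adj_Vpart_iff:
  assumes "bip_adj \<alpha> m r l p q u w" "p \<noteq> q"
  shows "u \<in> Vpart p \<longleftrightarrow> w \<in> Vpart q"
  using assms by (auto simp: bip_adj_def Vpart_def)

lemma card_common_bip_neighbours_le:
  fixes \<alpha> m :: "nat \<Rightarrow> 'a::{field,finite}"
  assumes two: "(2::'a) \<noteq> 0" and apq: "\<alpha> p \<noteq> \<alpha> q" "p \<noteq> q"
    and m: "inj_on m {1..l}" "\<forall>s\<in>{1..l}. m s \<noteq> 0"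
    and u: "u \<in> Vpart p" "u \<noteq> u'" and "B \<noteq> {}"
    and adj: "\<forall>w\<in>B. bip_adj \<alpha> m r l p q u w \<and> bip_adj \<alpha> m r l p q u' w"
  shows "card B \<le> 2 * l\<^sup>2 - l"
proof (rule card_common_neighbours_le[where \<alpha>=\<alpha> and p=p and q=q,
      OF two apq(1) m u(1) _ u(2)])
  show B: "B \<subseteq> Vpart q"
    using adj bip_adj_Vpart_iff[OF _ apq(2)] u(1) by blast
  obtain w where "w \<in> B"
    using \<open>B \<noteq> {}\<close> by blast
  then show "u' \<in> Vpart p"
    using adj B bip_adj_Vpart_iff[OF _ apq(2)] by blast
  show "\<forall>w\<in>B. (\<exists>e\<in>hedges \<alpha> m r l. {u, w} \<subseteq> e) \<and> (\<exists>e\<in>hedges \<alpha> m r l. {u', w} \<subseteq> e)"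
    using adj by (simp add: bip_adj_def)
qed

theorem lemma3p8:
  fixes \<alpha> m :: "nat \<Rightarrow> 'a::{field,finite}" and r l i j :: nat
  assumes odd_q: "odd (card (UNIV :: 'a set))"
    and r: "r \<ge> 2" and l: "l \<ge> 1"
    and alpha_inj: "inj_on \<alpha> {1..r}"
    and m_inj: "inj_on m {1..l}"
    and m_nz: "\<forall>s\<in>{1..l}. m s \<noteq> 0"
    and cond: "\<forall>s\<in>{1..l}. \<forall>t\<in>{1..l}. \<forall>i'\<in>{1..r}. \<forall>j'\<in>{1..r}. \<forall>k\<in>{1..r}.
                 i' \<noteq> j' \<and> i' \<noteq> k \<and> j' \<noteq> k \<longrightarrow>
                 m s * (\<alpha> k - \<alpha> i') \<noteq> m t * (\<alpha> k - \<alpha> j')"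
    and ij: "1 \<le> i" "i \<le> r" "1 \<le> j" "j \<le> r" "i \<noteq> j"
  shows "\<not> contains_Kst (bip_adj \<alpha> m r l i j) (Vpart i \<union> Vpart j) 2 (2 * l^2 - l + 1)"
proof
  assume "contains_Kst (bip_adj \<alpha> m r l i j) (Vpart i \<union> Vpart j) 2 (2 * l^2 - l + 1)"
  then obtain A B where A: "A \<subseteq> Vpart i \<union> Vpart j" "card A = 2"
    and B: "card B = 2 * l^2 - l + 1"
    and K: "\<forall>a\<in>A. \<forall>w\<in>B. bip_adj \<alpha> m r l i j a w"
    unfolding contains_Kst_def by blast
  obtain u u' where u: "A = {u, u'}" "u \<noteq> u'"
    using A(2) card_2_iff by metis
  have adj: "\<forall>w\<in>B. bip_adj \<alpha> m r l i j u w \<and> bip_adj \<alpha> m r l i j u' w"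
    using K u(1) by blast
  have B_ne: "B \<noteq> {}"
    using B by auto
  have two: "(2::'a) \<noteq> 0"
    by (rule two_neq_zero_if_odd_card[OF odd_q])
  have aij: "\<alpha> i \<noteq> \<alpha> j"
    using inj_onD[OF alpha_inj, of i j] ij by auto
  have "u \<in> Vpart i \<or> u \<in> Vpart j"
    using A(1) u(1) by blast
  then have "card B \<le> 2 * l\<^sup>2 - l"
  proof
    assume "u \<in> Vpart i"
    then show ?thesis
      by (rule card_common_bip_neighbours_le[where \<alpha>=\<alpha> and p=i and q=j,
            OF two aij ij(5) m_inj m_nz _ u(2) B_ne adj])
  next
    assume "u \<in> Vpart j"
    then show ?thesis
      by (rule card_common_bip_neighbours_le[where \<alpha>=\<alpha> and p=j and q=i,
            OF two aij[symmetric] ij(5)[symmetric] m_inj m_nz _ u(2) B_ne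
            adj[unfolded bip_adj_commute[of \<alpha> m r l i j]]])
  qed
  then show False
    using B by linarith
qed

end
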